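(* Let $0<k<n$ and let $\mu=\delta_n\cdots\delta_{k+1}:[k]\to[n]$ be the face operator $i\mapsto i$. Let $X$ be the pushout of $\Delta[0]\leftarrow\Delta[k]\xrightarrow{\mu}\Delta[n]$, i.e. $\Delta[n]$ with the face spanned by the vertices $0,\dots,k$ collapsed to a point. Then $DX\cong\Delta[n-k]$; more precisely, the map $X\to\Delta[n-k]$ induced by the order-preserving surjection $[n]\to[n-k]$ sending $0,\dots,k$ to $0$ and $i$ to $i-k$ for $i>k$ is, up to isomorphism, $\eta_X$.
   Context: $\delta_j:[n-1]\to[n]$ is the elementary face operator omitting $j$. A simplicial set is non-singular if every non-degenerate simplex has degreewise injective representing map. The desingularization $DX$ is the image of $X\to\prod_f Y$, $x\mapsto(f(x))_f$, over all quotient maps $f:X\to Y$ (maps $X\to X/R$ for operator-compatible families of equivalence relations) with $Y$ non-singular; $\eta_X:X\to DX$ is the corestriction. *)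

theory Defs
  imports Main
begin

text \<open>Order-preserving operators \<alpha> : [m] \<rightarrow> [n] are encoded as their value lists
  [\<alpha> 0, ..., \<alpha> m]: sorted lists of length m+1 with entries \<le> n.
  Composition \<beta> \<circ> \<alpha> is encoded as map (nth \<beta>) \<alpha>.\<close>

definition ordop :: "nat \<Rightarrow> nat \<Rightarrow> nat list \<Rightarrow> bool" where
  "ordop m n \<alpha> \<longleftrightarrow> length \<alpha> = Suc m \<and> sorted \<alpha> \<and> (\<forall>i\<in>set \<alpha>. i \<le> n)"

text \<open>A simplicial set: sx X n is the set of n-simplices; sop X n \<alpha> x is X(\<alpha>) x
  for x an n-simplex and \<alpha> : [m] \<rightarrow> [n].\<close>

record 'a sset =
  sx  :: "nat \<Rightarrow> 'a set"
  sop :: "nat \<Rightarrow> nat list \<Rightarrow> 'a \<Rightarrow> 'a"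

definition is_sset :: "'a sset \<Rightarrow> bool" where
  "is_sset X \<longleftrightarrow>
     (\<forall>m n \<alpha> x. ordop m n \<alpha> \<and> x \<in> sx X n \<longrightarrow> sop X n \<alpha> x \<in> sx X m) \<and>
     (\<forall>n x. x \<in> sx X n \<longrightarrow> sop X n [0..<Suc n] x = x) \<and>
     (\<forall>l m n \<alpha> \<beta> x. ordop l m \<alpha> \<and> ordop m n \<beta> \<and> x \<in> sx X n \<longrightarrow>
         sop X m \<alpha> (sop X n \<beta> x) = sop X n (map (nth \<beta>) \<alpha>) x)"

definition sset_map :: "'a sset \<Rightarrow> 'b sset \<Rightarrow> (nat \<Rightarrow> 'a \<Rightarrow> 'b) \<Rightarrow> bool" where
  "sset_map X Y f \<longleftrightarrow>
     (\<forall>n x. x \<in> sx X n \<longrightarrow> f n x \<in> sx Y n) \<and>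
     (\<forall>m n \<alpha> x. ordop m n \<alpha> \<and> x \<in> sx X n \<longrightarrow> f m (sop X n \<alpha> x) = sop Y n \<alpha> (f n x))"

definition sset_iso :: "'a sset \<Rightarrow> 'b sset \<Rightarrow> (nat \<Rightarrow> 'a \<Rightarrow> 'b) \<Rightarrow> bool" where
  "sset_iso X Y f \<longleftrightarrow> sset_map X Y f \<and> (\<forall>n. bij_betw (f n) (sx X n) (sx Y n))"

definition stdsimp :: "nat \<Rightarrow> nat list sset" where
  "stdsimp n = \<lparr> sx = (\<lambda>m. {\<alpha>. ordop m n \<alpha>}), sop = (\<lambda>p \<alpha> \<beta>. map (nth \<beta>) \<alpha>) \<rparr>"

text \<open>Degenerate simplices: images under a degeneracy operator (surjection [n] \<rightarrow> [m], m < n).\<close>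

definition degenerate :: "'a sset \<Rightarrow> nat \<Rightarrow> 'a \<Rightarrow> bool" where
  "degenerate X n x \<longleftrightarrow>
     (\<exists>m \<sigma> y. m < n \<and> ordop n m \<sigma> \<and> set \<sigma> = {0..m} \<and> y \<in> sx X m \<and> x = sop X m \<sigma> y)"

definition nonsingular :: "'a sset \<Rightarrow> bool" where
  "nonsingular X \<longleftrightarrow>
     (\<forall>n x. x \<in> sx X n \<and> \<not> degenerate X n x \<longrightarrow>
        (\<forall>m. inj_on (\<lambda>\<alpha>. sop X n \<alpha> x) {\<alpha>. ordop m n \<alpha>}))"

definition compat_rel :: "'a sset \<Rightarrow> (nat \<Rightarrow> ('a \<times> 'a) set) \<Rightarrow> bool" where
  "compat_rel X R \<longleftrightarrow>
     (\<forall>n. equiv (sx X n) (R n)) \<and>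
     (\<forall>m n \<alpha> x y. ordop m n \<alpha> \<and> (x, y) \<in> R n \<longrightarrow> (sop X n \<alpha> x, sop X n \<alpha> y) \<in> R m)"

definition quot :: "'a sset \<Rightarrow> (nat \<Rightarrow> ('a \<times> 'a) set) \<Rightarrow> 'a set sset" where
  "quot X R = \<lparr> sx = (\<lambda>n. sx X n // R n),
                sop = (\<lambda>n \<alpha> C. R (length \<alpha> - 1) `` {sop X n \<alpha> (SOME x. x \<in> C)}) \<rparr>"

text \<open>Index set of the product: quotient maps X \<rightarrow> X/R with X/R non-singular.\<close>

definition admissible :: "'a sset \<Rightarrow> (nat \<Rightarrow> ('a \<times> 'a) set) \<Rightarrow> bool" where
  "admissible X R \<longleftrightarrow> compat_rel X R \<and> nonsingular (quot X R)"

text \<open>The map X \<rightarrow> \<Prod>_R X/R, x \<mapsto> (f_R(x))_R (components off the index set are {}).\<close>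

definition eta :: "'a sset \<Rightarrow> nat \<Rightarrow> 'a \<Rightarrow> ((nat \<Rightarrow> ('a \<times> 'a) set) \<Rightarrow> 'a set)" where
  "eta X n x = (\<lambda>R. if admissible X R then R n `` {x} else {})"

text \<open>DX: the image of X in the product, with componentwise simplicial operators.\<close>

definition desing :: "'a sset \<Rightarrow> ((nat \<Rightarrow> ('a \<times> 'a) set) \<Rightarrow> 'a set) sset" where
  "desing X = \<lparr> sx = (\<lambda>n. eta X n ` sx X n),
                sop = (\<lambda>n \<alpha> z. (\<lambda>R. if admissible X R
                          then R (length \<alpha> - 1) `` {sop X n \<alpha> (SOME x. x \<in> z R)} else {})) \<rparr>"

definition mu_face :: "nat \<Rightarrow> nat list" where
  "mu_face k = [0..<Suc k]"

text \<open>The pushout of \<Delta>[0] \<leftarrow> \<Delta>[k] \<rightarrow> \<Delta>[n] (along \<mu>), modelled as the quotient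
  of \<Delta>[n] identifying all simplices in the image of \<mu>.\<close>

definition collapse_rel :: "nat \<Rightarrow> nat \<Rightarrow> nat \<Rightarrow> (nat list \<times> nat list) set" where
  "collapse_rel n k m = {(\<alpha>, \<beta>). ordop m n \<alpha> \<and> ordop m n \<beta> \<and>
      (\<alpha> = \<beta> \<or> ((\<exists>\<gamma>. ordop m k \<gamma> \<and> \<alpha> = map (nth (mu_face k)) \<gamma>) \<and>
                  (\<exists>\<gamma>. ordop m k \<gamma> \<and> \<beta> = map (nth (mu_face k)) \<gamma>)))}"

definition collapse :: "nat \<Rightarrow> nat \<Rightarrow> nat list set sset" where
  "collapse n k = quot (stdsimp n) (collapse_rel n k)"

text \<open>The map X \<rightarrow> \<Delta>[n-k] induced by s : [n] \<rightarrow> [n-k], s i = i - k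
  (so 0..k \<mapsto> 0 and i \<mapsto> i - k for i > k).\<close>

definition collapse_map :: "nat \<Rightarrow> nat \<Rightarrow> nat list set \<Rightarrow> nat list" where
  "collapse_map k m C = map (\<lambda>i. i - k) (SOME \<alpha>. \<alpha> \<in> C)"

end

theory Submission
  imports Defs
begin

text \<open>The surjection s : [n] \<rightarrow> [n-k], i \<mapsto> i - k, induces X \<rightarrow> \<Delta>[n-k], and \<Delta>[n-k] is
  non-singular, so its kernel is an admissible relation. Conversely every admissible relation R
  contains this kernel: in the non-singular quotient X/R the top simplex is a degeneracy \<sigma>^* z of
  a simplex z whose representing map is injective, and since the edges [0,i] with i \<le> k are
  collapsed, \<sigma> is constant on 0..k. Hence the kernel of X \<rightarrow> \<Delta>[n-k] is the finest admissible
  relation, so \<eta>_X has the same fibres as X \<rightarrow> \<Delta>[n-k] and DX \<cong> \<Delta>[n-k].\<close>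

section \<open>Simplicial operators and the standard simplex\<close>

lemma sop_closed: "is_sset X \<Longrightarrow> ordop m n \<alpha> \<Longrightarrow> x \<in> sx X n \<Longrightarrow> sop X n \<alpha> x \<in> sx X m"
  unfolding is_sset_def by blast

lemma sop_id: "is_sset X \<Longrightarrow> x \<in> sx X n \<Longrightarrow> sop X n [0..<Suc n] x = x"
  unfolding is_sset_def by blast

lemma sop_sop: "is_sset X \<Longrightarrow> ordop l m \<alpha> \<Longrightarrow> ordop m n \<beta> \<Longrightarrow> x \<in> sx X n \<Longrightarrow>
   sop X m \<alpha> (sop X n \<beta> x) = sop X n (map (nth \<beta>) \<alpha>) x"
  unfolding is_sset_def by blast

lemma ordop_id: "ordop n n [0..<Suc n]"
  by (auto simp: ordop_def simp del: upt_Suc)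

lemma ordop_comp:
  assumes a: "ordop l m \<alpha>" and b: "ordop m n \<beta>"
  shows "ordop l n (map (nth \<beta>) \<alpha>)"
proof -
  have idx: "\<forall>i\<in>set \<alpha>. i < length \<beta>"
    using a b by (auto simp: ordop_def)
  have "sorted (map (nth \<beta>) \<alpha>)"
    unfolding sorted_iff_nth_mono
  proof (intro allI impI)
    fix i j assume ij: "i \<le> j" "j < length (map (nth \<beta>) \<alpha>)"
    have "\<alpha> ! i \<le> \<alpha> ! j" using a ij by (auto simp: ordop_def sorted_iff_nth_mono)
    moreover have "\<alpha> ! j < length \<beta>" using idx ij by auto
    ultimately show "map (nth \<beta>) \<alpha> ! i \<le> map (nth \<beta>) \<alpha> ! j"
      using b ij by (auto simp: ordop_def sorted_nth_mono)
  qed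
  then show ?thesis
    using a b idx by (auto simp: ordop_def)
qed

lemma map_nth_upt_ordop: "ordop m n \<beta> \<Longrightarrow> map (nth [0..<Suc n]) \<beta> = \<beta>"
  by (auto simp: ordop_def intro!: map_idI simp del: upt_Suc)

lemma sx_stdsimp [simp]: "sx (stdsimp n) m = {\<alpha>. ordop m n \<alpha>}"
  by (simp add: stdsimp_def)

lemma sop_stdsimp [simp]: "sop (stdsimp n) p \<alpha> \<beta> = map (nth \<beta>) \<alpha>"
  by (simp add: stdsimp_def)

lemma is_sset_stdsimp: "is_sset (stdsimp n)"
proof -
  have "map (nth x) [0..<Suc p] = x" if "ordop p n x" for p x
    using that by (metis map_nth ordop_def)
  moreover have "map (nth x) (map (nth \<beta>) \<alpha>) = map (nth (map (nth x) \<beta>)) \<alpha>"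
    if "ordop l m \<alpha>" "ordop m p \<beta>" for l m p \<alpha> \<beta> and x :: "nat list"
    using that by (auto simp: ordop_def)
  ultimately show ?thesis
    unfolding is_sset_def by (auto intro: ordop_comp)
qed

text \<open>coface q i is \<delta>_i : [q] \<rightarrow> [q+1] (omitting i); codegeneracy p i is
  \<sigma>_i : [p] \<rightarrow> [p-1] (hitting i twice).\<close>

definition codegeneracy :: "nat \<Rightarrow> nat \<Rightarrow> nat list" where
  "codegeneracy p i = map (\<lambda>j. if j \<le> i then j else j - 1) [0..<Suc p]"

definition coface :: "nat \<Rightarrow> nat \<Rightarrow> nat list" where
  "coface q i = map (\<lambda>j. if j < i then j else Suc j) [0..<Suc q]"

lemma nth_codegeneracy: "j < Suc p \<Longrightarrow> codegeneracy p i ! j = (if j \<le> i then j else j - 1)"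
  unfolding codegeneracy_def by (simp del: upt_Suc)

lemma nth_coface: "j < Suc q \<Longrightarrow> coface q i ! j = (if j < i then j else Suc j)"
  unfolding coface_def by (simp del: upt_Suc)

lemma length_codegeneracy [simp]: "length (codegeneracy p i) = Suc p"
  by (simp add: codegeneracy_def del: upt_Suc)

lemma length_coface [simp]: "length (coface q i) = Suc q"
  by (simp add: coface_def del: upt_Suc)

lemma ordop_codegeneracy: "i \<le> q \<Longrightarrow> ordop (Suc q) q (codegeneracy (Suc q) i)"
  unfolding ordop_def sorted_iff_nth_mono
  by (auto simp: nth_codegeneracy in_set_conv_nth le_diff_conv)

lemma set_codegeneracy: "i \<le> q \<Longrightarrow> set (codegeneracy (Suc q) i) = {0..q}"
proof
  assume "i \<le> q"
  then show "set (codegeneracy (Suc q) i) \<subseteq> {0..q}"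
    using ordop_codegeneracy by (auto simp: ordop_def)
  show "{0..q} \<subseteq> set (codegeneracy (Suc q) i)"
  proof
    fix j assume "j \<in> {0..q}"
    then have "codegeneracy (Suc q) i ! (if j \<le> i then j else Suc j) = j"
      and "(if j \<le> i then j else Suc j) < Suc (Suc q)"
      by (auto simp: nth_codegeneracy)
    then show "j \<in> set (codegeneracy (Suc q) i)"
      by (metis length_codegeneracy nth_mem)
  qed
qed

lemma ordop_coface: "ordop q (Suc q) (coface q i)"
  unfolding ordop_def sorted_iff_nth_mono
  by (auto simp: nth_coface in_set_conv_nth)

lemma factor_through_codegeneracy:
  assumes "length \<delta> = Suc (Suc q)" and "i \<le> q" and "\<delta> ! i = \<delta> ! Suc i"
  shows "map (nth (map (nth \<delta>) (coface q (Suc i)))) (codegeneracy (Suc q) i) = \<delta>"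
proof (rule nth_equalityI)
  fix j assume "j < length (map (nth (map (nth \<delta>) (coface q (Suc i)))) (codegeneracy (Suc q) i))"
  then have j: "j < Suc (Suc q)" by simp
  consider "j \<le> i" | "j = Suc i" | "Suc i < j" by linarith
  then show "map (nth (map (nth \<delta>) (coface q (Suc i)))) (codegeneracy (Suc q) i) ! j = \<delta> ! j"
    by cases (use assms j in \<open>auto simp: nth_codegeneracy nth_coface\<close>)
qed (simp add: assms)

lemma sorted_not_distinct_adjacent:
  assumes "sorted \<delta>" and "\<not> distinct \<delta>"
  obtains i where "Suc i < length \<delta>" and "\<delta> ! i = \<delta> ! Suc i"
proof -
  obtain i j where ij: "i < j" "j < length \<delta>" "\<delta> ! i = \<delta> ! j"
    using assms(2) unfolding distinct_conv_nth by (metis linorder_neqE_nat)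
  have "\<delta> ! i \<le> \<delta> ! Suc i" "\<delta> ! Suc i \<le> \<delta> ! j"
    using sorted_nth_mono[OF assms(1), of i "Suc i"] sorted_nth_mono[OF assms(1), of "Suc i" j] ij
    by auto
  moreover have "Suc i < length \<delta>" using ij by simp
  ultimately show thesis using ij by (intro that[of i]) auto
qed

lemma stdsimp_degenerate_if_not_distinct:
  assumes "ordop p N \<delta>" and "\<not> distinct \<delta>"
  shows "degenerate (stdsimp N) p \<delta>"
proof -
  have "sorted \<delta>" using assms(1) by (simp add: ordop_def)
  then obtain i where i: "Suc i < length \<delta>" "\<delta> ! i = \<delta> ! Suc i"
    using assms(2) by (rule sorted_not_distinct_adjacent)
  obtain q where p: "p = Suc q" and "i \<le> q"
    using i assms(1) by (cases p) (auto simp: ordop_def)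
  moreover have "ordop q N (map (nth \<delta>) (coface q (Suc i)))"
    using assms(1) p by (intro ordop_comp[OF ordop_coface]) simp
  moreover have "\<delta> = map (nth (map (nth \<delta>) (coface q (Suc i)))) (codegeneracy p i)"
    using assms(1) i p \<open>i \<le> q\<close> by (simp add: factor_through_codegeneracy ordop_def)
  ultimately show ?thesis
    unfolding degenerate_def using ordop_codegeneracy[of i q] set_codegeneracy[of i q]
    by (intro exI[of _ q] exI[of _ "codegeneracy p i"] exI[of _ "map (nth \<delta>) (coface q (Suc i))"])
      auto
qed

lemma map_nth_inj:
  assumes "distinct xs" "set a \<subseteq> {..<length xs}" "set b \<subseteq> {..<length xs}"
    and "map (nth xs) a = map (nth xs) b"
  shows "a = b"
proof -
  have "inj_on (nth xs) (set a \<union> set b)"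
    using assms(1-3) inj_on_nth[of xs "{..<length xs}"] by (auto intro: inj_on_subset)
  then show ?thesis
    using assms(4) inj_on_map_eq_map by blast
qed

lemma nonsingular_stdsimp: "nonsingular (stdsimp N)"
  unfolding nonsingular_def
proof (intro allI impI inj_onI)
  fix p \<delta> m \<alpha> \<beta>
  assume "\<delta> \<in> sx (stdsimp N) p \<and> \<not> degenerate (stdsimp N) p \<delta>"
    and "\<alpha> \<in> {\<alpha>. ordop m p \<alpha>}" "\<beta> \<in> {\<alpha>. ordop m p \<alpha>}"
    and "sop (stdsimp N) p \<alpha> \<delta> = sop (stdsimp N) p \<beta> \<delta>"
  then have "distinct \<delta>" "set \<alpha> \<subseteq> {..<length \<delta>}" "set \<beta> \<subseteq> {..<length \<delta>}"
    and "map (nth \<delta>) \<alpha> = map (nth \<delta>) \<beta>"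
    using stdsimp_degenerate_if_not_distinct by (auto simp: ordop_def less_Suc_eq_le)
  then show "\<alpha> = \<beta>"
    by (rule map_nth_inj)
qed

section \<open>Quotients and maps with prescribed fibres\<close>

lemma sop_quot_class:
  assumes R: "compat_rel X R" and \<alpha>: "ordop m n \<alpha>" and x: "x \<in> sx X n"
  shows "sop (quot X R) n \<alpha> (R n `` {x}) = R m `` {sop X n \<alpha> x}"
proof -
  have eqn: "equiv (sx X n) (R n)" and eqm: "equiv (sx X m) (R m)"
    using R by (auto simp: compat_rel_def)
  have "(SOME y. y \<in> R n `` {x}) \<in> R n `` {x}"
    using equiv_class_self[OF eqn x] by (rule someI)
  then have "(sop X n \<alpha> x, sop X n \<alpha> (SOME y. y \<in> R n `` {x})) \<in> R m"
    using R \<alpha> by (auto simp: compat_rel_def)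
  moreover have "length \<alpha> - 1 = m"
    using \<alpha> by (simp add: ordop_def)
  ultimately show ?thesis
    using eqm by (simp add: quot_def equiv_class_eq)
qed

lemma sx_quot [simp]: "sx (quot X R) n = sx X n // R n"
  by (simp add: quot_def)

lemma is_sset_quot:
  assumes X: "is_sset X" and R: "compat_rel X R"
  shows "is_sset (quot X R)"
proof -
  have closed: "sop (quot X R) n \<alpha> C \<in> sx (quot X R) m"
    if \<alpha>: "ordop m n \<alpha>" and "C \<in> sx (quot X R) n" for m n \<alpha> C
  proof -
    obtain x where x: "x \<in> sx X n" "C = R n `` {x}"
      using \<open>C \<in> sx (quot X R) n\<close> by (auto elim: quotientE)
    then show ?thesis
      using sop_quot_class[OF R \<alpha> x(1)] sop_closed[OF X \<alpha> x(1)] by (simp add: quotientI)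
  qed
  have ident: "sop (quot X R) n [0..<Suc n] C = C" if "C \<in> sx (quot X R) n" for n C
  proof -
    obtain x where x: "x \<in> sx X n" "C = R n `` {x}"
      using \<open>C \<in> sx (quot X R) n\<close> by (auto elim: quotientE)
    then show ?thesis
      using sop_quot_class[OF R ordop_id x(1)] sop_id[OF X x(1)] by simp
  qed
  have comp: "sop (quot X R) m \<alpha> (sop (quot X R) n \<beta> C) = sop (quot X R) n (map (nth \<beta>) \<alpha>) C"
    if \<alpha>: "ordop l m \<alpha>" and \<beta>: "ordop m n \<beta>" and "C \<in> sx (quot X R) n" for l m n \<alpha> \<beta> C
  proof -
    obtain x where x: "x \<in> sx X n" "C = R n `` {x}"
      using \<open>C \<in> sx (quot X R) n\<close> by (auto elim: quotientE)
    then have "sop (quot X R) m \<alpha> (sop (quot X R) n \<beta> C) = R l `` {sop X m \<alpha> (sop X n \<beta> x)}"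
      using sop_quot_class[OF R \<beta> x(1)] sop_quot_class[OF R \<alpha> sop_closed[OF X \<beta> x(1)]] by simp
    also have "\<dots> = sop (quot X R) n (map (nth \<beta>) \<alpha>) C"
      using x sop_sop[OF X \<alpha> \<beta> x(1)] sop_quot_class[OF R ordop_comp[OF \<alpha> \<beta>] x(1)] by simp
    finally show ?thesis .
  qed
  show ?thesis
    unfolding is_sset_def using closed ident comp by auto
qed

lemma sset_map_quot:
  assumes "compat_rel X R"
  shows "sset_map X (quot X R) (\<lambda>n x. R n `` {x})"
  unfolding sset_map_def using sop_quot_class[OF assms] by (auto intro: quotientI)

lemma bij_betw_descend:
  assumes surj: "f ` A = B" and fibres: "\<And>x y. x \<in> A \<Longrightarrow> y \<in> A \<Longrightarrow> h x = h y \<longleftrightarrow> f x = f y"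
  defines "\<phi> \<equiv> \<lambda>z. f (SOME x. x \<in> A \<and> h x = z)"
  shows "bij_betw \<phi> (h ` A) B" and "\<And>x. x \<in> A \<Longrightarrow> \<phi> (h x) = f x"
proof -
  show \<phi>_h: "\<phi> (h x) = f x" if x: "x \<in> A" for x
  proof -
    have "(SOME y. y \<in> A \<and> h y = h x) \<in> A \<and> h (SOME y. y \<in> A \<and> h y = h x) = h x"
      by (rule someI[of "\<lambda>y. y \<in> A \<and> h y = h x" x]) (simp add: x)
    then show ?thesis
      unfolding \<phi>_def by (metis fibres x)
  qed
  have "inj_on \<phi> (h ` A)"
  proof (rule inj_onI)
    fix z z' assume "z \<in> h ` A" "z' \<in> h ` A" and eq: "\<phi> z = \<phi> z'"
    then obtain x x' where x: "x \<in> A" "z = h x" and x': "x' \<in> A" "z' = h x'"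
      by blast
    then show "z = z'"
      using eq \<phi>_h fibres by metis
  qed
  moreover have "\<phi> ` h ` A = f ` A"
    unfolding image_image using \<phi>_h by (rule image_cong[OF refl])
  ultimately show "bij_betw \<phi> (h ` A) B"
    unfolding bij_betw_def using surj by simp
qed

lemma sset_iso_descend:
  assumes X: "is_sset X" and g: "sset_map X Y g" and h: "sset_map X Z h"
    and g_surj: "\<And>m. g m ` sx X m = sx Y m" and h_surj: "\<And>m. h m ` sx X m = sx Z m"
    and same_fibres: "\<And>m x y. x \<in> sx X m \<Longrightarrow> y \<in> sx X m \<Longrightarrow> h m x = h m y \<longleftrightarrow> g m x = g m y"
  defines "\<phi> \<equiv> \<lambda>m z. g m (SOME x. x \<in> sx X m \<and> h m x = z)"
  shows "sset_iso Z Y \<phi>" and "\<And>m x. x \<in> sx X m \<Longrightarrow> \<phi> m (h m x) = g m x"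
proof -
  have bij: "bij_betw (\<phi> m) (sx Z m) (sx Y m)" for m
    unfolding \<phi>_def h_surj[symmetric] using g_surj same_fibres by (rule bij_betw_descend(1))
  show \<phi>_h: "\<phi> m (h m x) = g m x" if "x \<in> sx X m" for m x
    unfolding \<phi>_def using g_surj same_fibres that by (rule bij_betw_descend(2))
  have "\<phi> m (sop Z n \<alpha> z) = sop Y n \<alpha> (\<phi> n z)" if \<alpha>: "ordop m n \<alpha>" and "z \<in> sx Z n" for m n \<alpha> z
  proof -
    obtain x where x: "x \<in> sx X n" "z = h n x"
      using \<open>z \<in> sx Z n\<close> h_surj by blast
    have "sop Z n \<alpha> z = h m (sop X n \<alpha> x)"
      using h \<alpha> x by (simp add: sset_map_def)
    then show ?thesis
      using g \<alpha> x \<phi>_h[OF sop_closed[OF X \<alpha> x(1)]] \<phi>_h[OF x(1)] by (simp add: sset_map_def)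
  qed
  moreover have "\<phi> n z \<in> sx Y n" if "z \<in> sx Z n" for n z
    using bij_betw_apply[OF bij that] .
  ultimately show "sset_iso Z Y \<phi>"
    unfolding sset_iso_def sset_map_def using bij by blast
qed

lemma nonsingular_iso:
  assumes A: "is_sset A" and f: "sset_iso A B f" and B: "nonsingular B"
  shows "nonsingular A"
  unfolding nonsingular_def
proof (intro allI impI inj_onI; elim conjE)
  fix n x m \<alpha> \<beta>
  assume x: "x \<in> sx A n" and nd: "\<not> degenerate A n x"
    and \<alpha>: "\<alpha> \<in> {\<alpha>. ordop m n \<alpha>}" and \<beta>: "\<beta> \<in> {\<alpha>. ordop m n \<alpha>}"
    and eq: "sop A n \<alpha> x = sop A n \<beta> x"
  have map: "sset_map A B f" and bij: "\<And>n. bij_betw (f n) (sx A n) (sx B n)"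
    using f by (auto simp: sset_iso_def)
  have "\<not> degenerate B n (f n x)"
  proof
    assume "degenerate B n (f n x)"
    then obtain p \<sigma> y where d: "p < n" "ordop n p \<sigma>" "set \<sigma> = {0..p}" "y \<in> sx B p"
      "f n x = sop B p \<sigma> y"
      unfolding degenerate_def by blast
    obtain y' where y': "y' \<in> sx A p" "y = f p y'"
      using bij_betw_imp_surj_on[OF bij] d(4) by blast
    have "f n x = f n (sop A p \<sigma> y')"
      using d(5) y' map d(2) by (simp add: sset_map_def)
    then have "x = sop A p \<sigma> y'"
      using bij_betw_imp_inj_on[OF bij] x sop_closed[OF A d(2) y'(1)] by (auto dest: inj_onD)
    with d y' nd show False
      unfolding degenerate_def by blast
  qed
  moreover have "f n x \<in> sx B n"
    using map x by (simp add: sset_map_def)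
  ultimately have inj: "inj_on (\<lambda>\<alpha>. sop B n \<alpha> (f n x)) {\<alpha>. ordop m n \<alpha>}"
    using B unfolding nonsingular_def by blast
  have "sop B n \<alpha> (f n x) = f m (sop A n \<alpha> x)" "sop B n \<beta> (f n x) = f m (sop A n \<beta> x)"
    using map \<alpha> \<beta> x by (auto simp: sset_map_def)
  then have "sop B n \<alpha> (f n x) = sop B n \<beta> (f n x)"
    using eq by simp
  then show "\<alpha> = \<beta>"
    using inj_onD[OF inj _ \<alpha> \<beta>] by simp
qed

definition kernel_rel :: "'a sset \<Rightarrow> (nat \<Rightarrow> 'a \<Rightarrow> 'b) \<Rightarrow> nat \<Rightarrow> ('a \<times> 'a) set" where
  "kernel_rel X g m = {(x, y). x \<in> sx X m \<and> y \<in> sx X m \<and> g m x = g m y}"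

lemma compat_rel_kernel:
  assumes "is_sset X" and "sset_map X Y g"
  shows "compat_rel X (kernel_rel X g)"
  unfolding compat_rel_def
proof (intro conjI allI impI)
  show "equiv (sx X m) (kernel_rel X g m)" for m
    by (auto simp: equiv_def refl_on_def sym_def trans_def kernel_rel_def)
  show "(sop X n \<alpha> x, sop X n \<alpha> y) \<in> kernel_rel X g m"
    if "ordop m n \<alpha> \<and> (x, y) \<in> kernel_rel X g n" for m n \<alpha> x y
    using that assms sop_closed by (auto simp: kernel_rel_def sset_map_def)
qed

lemma kernel_class_eq_iff:
  assumes "x \<in> sx X m" "y \<in> sx X m"
  shows "kernel_rel X g m `` {x} = kernel_rel X g m `` {y} \<longleftrightarrow> g m x = g m y"
  using assms by (auto simp: kernel_rel_def)

lemma admissible_kernel: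
  assumes X: "is_sset X" and g: "sset_map X Y g" and g_surj: "\<And>m. g m ` sx X m = sx Y m"
    and Y: "nonsingular Y"
  shows "admissible X (kernel_rel X g)"
proof -
  have K: "compat_rel X (kernel_rel X g)"
    using X g by (rule compat_rel_kernel)
  have "sset_iso (quot X (kernel_rel X g)) Y (\<lambda>m z. g m (SOME x. x \<in> sx X m \<and> kernel_rel X g m `` {x} = z))"
    by (rule sset_iso_descend(1)[OF X g sset_map_quot[OF K] g_surj])
      (auto simp: quotient_def kernel_class_eq_iff)
  then show ?thesis
    unfolding admissible_def using K nonsingular_iso[OF is_sset_quot[OF X K] _ Y] by blast
qed

section \<open>Desingularization\<close>

lemma ex_nondegenerate_factor:
  assumes Y: "is_sset Y" and "y \<in> sx Y n"
  shows "\<exists>p \<sigma> z. ordop n p \<sigma> \<and> z \<in> sx Y p \<and> \<not> degenerate Y p z \<and> y = sop Y p \<sigma> z"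
  using assms(2)
proof (induction n arbitrary: y rule: less_induct)
  case (less n)
  show ?case
  proof (cases "degenerate Y n y")
    case False
    then show ?thesis
      using less.prems sop_id[OF Y less.prems] ordop_id[of n]
      by (intro exI[of _ n] exI[of _ "[0..<Suc n]"] exI[of _ y]) simp
  next
    case True
    then obtain m \<sigma> w where "m < n" "ordop n m \<sigma>" "w \<in> sx Y m" "y = sop Y m \<sigma> w"
      unfolding degenerate_def by blast
    moreover obtain p \<tau> z where "ordop m p \<tau>" "z \<in> sx Y p" "\<not> degenerate Y p z" "w = sop Y p \<tau> z"
      using less.IH[OF \<open>m < n\<close> \<open>w \<in> sx Y m\<close>] by blast
    ultimately have "ordop n p (map (nth \<tau>) \<sigma>)" "y = sop Y p (map (nth \<tau>) \<sigma>) z"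
      using ordop_comp sop_sop[OF Y] by auto
    with \<open>z \<in> sx Y p\<close> \<open>\<not> degenerate Y p z\<close> show ?thesis
      by blast
  qed
qed

lemma nonsingular_sop_eq_iff:
  assumes Y: "is_sset Y" and "nonsingular Y" and y: "y \<in> sx Y n"
  obtains p \<sigma> where "ordop n p \<sigma>"
    and "\<And>m \<alpha> \<beta>. ordop m n \<alpha> \<Longrightarrow> ordop m n \<beta> \<Longrightarrow>
           sop Y n \<alpha> y = sop Y n \<beta> y \<longleftrightarrow> map (nth \<sigma>) \<alpha> = map (nth \<sigma>) \<beta>"
proof -
  obtain p \<sigma> z where \<sigma>: "ordop n p \<sigma>" and z: "z \<in> sx Y p" "\<not> degenerate Y p z"
    and y_eq: "y = sop Y p \<sigma> z"
    using ex_nondegenerate_factor[OF Y y] by blast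
  have inj: "inj_on (\<lambda>\<alpha>. sop Y p \<alpha> z) {\<alpha>. ordop m p \<alpha>}" for m
    using \<open>nonsingular Y\<close> z unfolding nonsingular_def by blast
  show thesis
  proof (rule that[OF \<sigma>])
    fix m \<alpha> \<beta> assume \<alpha>: "ordop m n \<alpha>" and \<beta>: "ordop m n \<beta>"
    have "sop Y n \<alpha> y = sop Y p (map (nth \<sigma>) \<alpha>) z" "sop Y n \<beta> y = sop Y p (map (nth \<sigma>) \<beta>) z"
      using y_eq sop_sop[OF Y \<alpha> \<sigma> z(1)] sop_sop[OF Y \<beta> \<sigma> z(1)] by simp_all
    moreover have "map (nth \<sigma>) \<alpha> \<in> {\<alpha>. ordop m p \<alpha>}" "map (nth \<sigma>) \<beta> \<in> {\<alpha>. ordop m p \<alpha>}"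
      using ordop_comp[OF \<alpha> \<sigma>] ordop_comp[OF \<beta> \<sigma>] by simp_all
    ultimately show "sop Y n \<alpha> y = sop Y n \<beta> y \<longleftrightarrow> map (nth \<sigma>) \<alpha> = map (nth \<sigma>) \<beta>"
      using inj_onD[OF inj] by auto
  qed
qed

lemma sx_desing [simp]: "sx (desing X) m = eta X m ` sx X m"
  by (simp add: desing_def)

lemma sop_desing_eta:
  assumes x: "x \<in> sx X n" and \<alpha>: "ordop m n \<alpha>"
  shows "sop (desing X) n \<alpha> (eta X n x) = eta X m (sop X n \<alpha> x)"
proof
  fix R
  show "sop (desing X) n \<alpha> (eta X n x) R = eta X m (sop X n \<alpha> x) R"
  proof (cases "admissible X R")
    case True
    then have "compat_rel X R"
      by (simp add: admissible_def)
    then have "sop (quot X R) n \<alpha> (R n `` {x}) = R m `` {sop X n \<alpha> x}"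
      using \<alpha> x by (rule sop_quot_class)
    with True show ?thesis
      by (simp add: desing_def eta_def quot_def)
  qed (simp add: desing_def eta_def)
qed

lemma sset_map_eta: "sset_map X (desing X) (eta X)"
  unfolding sset_map_def using sop_desing_eta by fastforce

lemma eta_eq_iff_minimal_kernel:
  assumes K: "admissible X (kernel_rel X g)"
    and minimal: "\<And>R m. admissible X R \<Longrightarrow> kernel_rel X g m \<subseteq> R m"
    and x: "x \<in> sx X m" and y: "y \<in> sx X m"
  shows "eta X m x = eta X m y \<longleftrightarrow> g m x = g m y"
proof
  assume "eta X m x = eta X m y"
  then have "kernel_rel X g m `` {x} = kernel_rel X g m `` {y}"
    using K unfolding eta_def by meson
  then show "g m x = g m y"
    using kernel_class_eq_iff[OF x y] by blast
next
  assume g: "g m x = g m y"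
  show "eta X m x = eta X m y"
  proof
    fix R
    show "eta X m x R = eta X m y R"
    proof (cases "admissible X R")
      case True
      then have "(x, y) \<in> R m" and "equiv (sx X m) (R m)"
        using minimal x y g by (auto simp: kernel_rel_def admissible_def compat_rel_def)
      with True show ?thesis
        by (simp add: eta_def equiv_class_eq)
    qed (simp add: eta_def)
  qed
qed

theorem desing_iso_of_minimal_kernel:
  assumes X: "is_sset X" and g: "sset_map X Y g" and g_surj: "\<And>m. g m ` sx X m = sx Y m"
    and Y: "nonsingular Y"
    and minimal: "\<And>R m. admissible X R \<Longrightarrow> kernel_rel X g m \<subseteq> R m"
  shows "\<exists>\<phi>. sset_iso (desing X) Y \<phi> \<and> (\<forall>m x. x \<in> sx X m \<longrightarrow> \<phi> m (eta X m x) = g m x)"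
proof -
  have "admissible X (kernel_rel X g)"
    using X g g_surj Y by (rule admissible_kernel)
  then have "\<And>m x y. x \<in> sx X m \<Longrightarrow> y \<in> sx X m \<Longrightarrow> eta X m x = eta X m y \<longleftrightarrow> g m x = g m y"
    using minimal by (rule eta_eq_iff_minimal_kernel)
  then show ?thesis
    using sset_iso_descend[OF X g sset_map_eta g_surj sx_desing[symmetric]] by blast
qed

section \<open>The simplex with a collapsed face\<close>

lemma collapse_rel_iff:
  "(\<alpha>, \<beta>) \<in> collapse_rel n k m \<longleftrightarrow>
     ordop m n \<alpha> \<and> ordop m n \<beta> \<and> (\<alpha> = \<beta> \<or> ordop m k \<alpha> \<and> ordop m k \<beta>)"
proof -
  have "map (nth (mu_face k)) \<gamma> = \<gamma>" if "ordop m k \<gamma>" for \<gamma>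
    using that by (auto simp: mu_face_def ordop_def intro!: map_idI simp del: upt_Suc)
  then show ?thesis
    unfolding collapse_rel_def by auto
qed

lemma compat_rel_collapse_rel: "compat_rel (stdsimp n) (collapse_rel n k)"
  unfolding compat_rel_def
proof (intro conjI allI impI)
  show "equiv (sx (stdsimp n) m) (collapse_rel n k m)" for m
    by (auto simp: equiv_def refl_on_def sym_def trans_def collapse_rel_iff)
  show "(sop (stdsimp n) p \<alpha> \<beta>, sop (stdsimp n) p \<alpha> \<beta>') \<in> collapse_rel n k m"
    if "ordop m p \<alpha> \<and> (\<beta>, \<beta>') \<in> collapse_rel n k p" for m p \<alpha> \<beta> \<beta>'
    using that by (auto simp: collapse_rel_iff ordop_comp)
qed

lemma is_sset_collapse: "is_sset (collapse n k)"
  unfolding collapse_def by (rule is_sset_quot[OF is_sset_stdsimp compat_rel_collapse_rel])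

lemma sx_collapse: "sx (collapse n k) m = {\<beta>. ordop m n \<beta>} // collapse_rel n k m"
  by (simp add: collapse_def)

lemma sop_collapse_class:
  "ordop m p \<alpha> \<Longrightarrow> ordop p n \<beta> \<Longrightarrow>
     sop (collapse n k) p \<alpha> (collapse_rel n k p `` {\<beta>}) = collapse_rel n k m `` {map (nth \<beta>) \<alpha>}"
  using sop_quot_class[OF compat_rel_collapse_rel, of m p \<alpha> \<beta>] by (simp add: collapse_def)

lemma collapse_map_class:
  assumes "ordop m n \<beta>"
  shows "collapse_map k m (collapse_rel n k m `` {\<beta>}) = map (\<lambda>i. i - k) \<beta>"
proof -
  have "\<beta> \<in> collapse_rel n k m `` {\<beta>}"
    using assms by (simp add: collapse_rel_iff)
  then have "(\<beta>, SOME \<gamma>. \<gamma> \<in> collapse_rel n k m `` {\<beta>}) \<in> collapse_rel n k m"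
    by (metis Image_singleton_iff someI)
  moreover have "map (\<lambda>i. i - k) \<gamma> = replicate (Suc m) 0" if "ordop m k \<gamma>" for \<gamma>
  proof -
    have "map (\<lambda>i. i - k) \<gamma> = map (\<lambda>i. 0) \<gamma>"
      using that by (auto simp: ordop_def intro: map_cong)
    then show ?thesis
      using that unfolding ordop_def by (metis map_replicate_const)
  qed
  ultimately show ?thesis
    unfolding collapse_map_def collapse_rel_iff by (auto simp: ordop_def)
qed

lemma ordop_shift_down: "ordop m n \<beta> \<Longrightarrow> ordop m (n - k) (map (\<lambda>i. i - k) \<beta>)"
  unfolding ordop_def by (auto simp: sorted_iff_nth_mono diff_le_mono)

lemma sset_map_collapse_map: "sset_map (collapse n k) (stdsimp (n - k)) (collapse_map k)"
proof -
  have in_stdsimp: "collapse_map k m x \<in> sx (stdsimp (n - k)) m" if x: "x \<in> sx (collapse n k) m" for m x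
  proof -
    obtain \<beta> where "ordop m n \<beta>" "x = collapse_rel n k m `` {\<beta>}"
      using x by (auto simp: sx_collapse elim: quotientE)
    then show ?thesis
      by (simp add: collapse_map_class ordop_shift_down)
  qed
  have commutes: "collapse_map k m (sop (collapse n k) p \<alpha> x) = sop (stdsimp (n - k)) p \<alpha> (collapse_map k p x)"
    if \<alpha>: "ordop m p \<alpha>" and "x \<in> sx (collapse n k) p" for m p \<alpha> x
  proof -
    obtain \<beta> where \<beta>: "ordop p n \<beta>" "x = collapse_rel n k p `` {\<beta>}"
      using \<open>x \<in> sx (collapse n k) p\<close> by (auto simp: sx_collapse elim: quotientE)
    then have "collapse_map k m (sop (collapse n k) p \<alpha> x) = map (\<lambda>i. i - k) (map (nth \<beta>) \<alpha>)"
      using sop_collapse_class[OF \<alpha> \<beta>(1)] collapse_map_class[OF ordop_comp[OF \<alpha> \<beta>(1)]] by simp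
    also have "\<dots> = map (nth (map (\<lambda>i. i - k) \<beta>)) \<alpha>"
      using \<alpha> \<beta>(1) by (auto simp: ordop_def)
    also have "\<dots> = sop (stdsimp (n - k)) p \<alpha> (collapse_map k p x)"
      using \<beta> collapse_map_class[OF \<beta>(1)] by simp
    finally show ?thesis .
  qed
  show ?thesis
    unfolding sset_map_def using in_stdsimp commutes by auto
qed

lemma collapse_map_surj:
  assumes "k \<le> n"
  shows "collapse_map k m ` sx (collapse n k) m = sx (stdsimp (n - k)) m"
proof
  show "collapse_map k m ` sx (collapse n k) m \<subseteq> sx (stdsimp (n - k)) m"
    using sset_map_collapse_map by (auto simp: sset_map_def)
  show "sx (stdsimp (n - k)) m \<subseteq> collapse_map k m ` sx (collapse n k) m"
  proof
    fix \<delta> assume "\<delta> \<in> sx (stdsimp (n - k)) m"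
    then have shifted: "ordop m n (map (\<lambda>i. i + k) \<delta>)"
      using assms by (auto simp: ordop_def sorted_iff_nth_mono)
    moreover have "map (\<lambda>i. i - k) (map (\<lambda>i. i + k) \<delta>) = \<delta>"
      by (simp add: map_idI)
    ultimately show "\<delta> \<in> collapse_map k m ` sx (collapse n k) m"
      unfolding sx_collapse by (metis collapse_map_class image_eqI mem_Collect_eq quotientI)
  qed
qed

lemma map_nth_eq_if_collapsed_eq:
  assumes const: "\<And>i. i \<le> k \<Longrightarrow> \<sigma> ! i = \<sigma> ! 0"
    and eq: "map (\<lambda>i. i - k) \<beta> = map (\<lambda>i. i - (k::nat)) \<beta>'"
  shows "map (nth \<sigma>) \<beta> = map (nth \<sigma>) \<beta>'"
proof (rule nth_equalityI)
  have len: "length \<beta> = length \<beta>'"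
    using eq by (metis length_map)
  then show "length (map (nth \<sigma>) \<beta>) = length (map (nth \<sigma>) \<beta>')"
    by simp
  fix j assume "j < length (map (nth \<sigma>) \<beta>)"
  then have j: "j < length \<beta>" "j < length \<beta>'"
    using len by simp_all
  then have diff: "\<beta> ! j - k = \<beta>' ! j - k"
    using eq by (metis nth_map)
  have "\<sigma> ! (\<beta> ! j) = \<sigma> ! (\<beta>' ! j)"
  proof (cases "\<beta> ! j \<le> k")
    case True
    then have "\<beta>' ! j \<le> k"
      using diff by simp
    then show ?thesis
      using const[OF True] const[OF \<open>\<beta>' ! j \<le> k\<close>] by simp
  next
    case False
    then have "\<beta> ! j = \<beta>' ! j"
      using diff by arith
    then show ?thesis
      by simp
  qed
  then show "map (nth \<sigma>) \<beta> ! j = map (nth \<sigma>) \<beta>' ! j"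
    using j by simp
qed

lemma admissible_collapse_classes:
  assumes "k \<le> n" and R: "admissible (collapse n k) R"
  obtains \<sigma> :: "nat list" where "\<And>i. i \<le> k \<Longrightarrow> \<sigma> ! i = \<sigma> ! 0"
    and "\<And>m \<beta> \<beta>'. ordop m n \<beta> \<Longrightarrow> ordop m n \<beta>' \<Longrightarrow> map (nth \<sigma>) \<beta> = map (nth \<sigma>) \<beta>' \<Longrightarrow>
           R m `` {collapse_rel n k m `` {\<beta>}} = R m `` {collapse_rel n k m `` {\<beta>'}}"
proof -
  let ?X = "collapse n k" and ?Y = "quot (collapse n k) R" and ?c = "\<lambda>m \<beta>. collapse_rel n k m `` {\<beta>}"
  have cR: "compat_rel ?X R" and ns: "nonsingular ?Y"
    using R by (auto simp: admissible_def)
  have Y: "is_sset ?Y"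
    using is_sset_collapse cR by (rule is_sset_quot)
  define y where "y = R n `` {?c n [0..<Suc n]}"
  have top: "?c n [0..<Suc n] \<in> sx ?X n"
    using ordop_id by (auto simp: sx_collapse intro: quotientI)
  then have "y \<in> sx ?Y n"
    unfolding y_def by (auto intro: quotientI)
  have sop_y: "sop ?Y n \<beta> y = R m `` {?c m \<beta>}" if "ordop m n \<beta>" for m \<beta>
    using sop_quot_class[OF cR that top] sop_collapse_class[OF that ordop_id] map_nth_upt_ordop[OF that]
    by (simp add: y_def del: upt_Suc)
  obtain p \<sigma> where \<sigma>: "ordop n p \<sigma>" and sop_y_eq: "\<And>m \<alpha> \<beta>. ordop m n \<alpha> \<Longrightarrow> ordop m n \<beta> \<Longrightarrow>
      sop ?Y n \<alpha> y = sop ?Y n \<beta> y \<longleftrightarrow> map (nth \<sigma>) \<alpha> = map (nth \<sigma>) \<beta>"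
    using nonsingular_sop_eq_iff[OF Y ns \<open>y \<in> sx ?Y n\<close>] by blast
  have const: "\<sigma> ! i = \<sigma> ! 0" if "i \<le> k" for i
  proof -
    have edges: "ordop 1 n [0, i]" "ordop 1 n [0, 0]"
      using that assms(1) by (auto simp: ordop_def)
    moreover have "?c 1 [0, i] = ?c 1 [0, 0]"
      using edges that by (auto simp: collapse_rel_iff ordop_def)
    ultimately have "sop ?Y n [0, i] y = sop ?Y n [0, 0] y"
      using sop_y by simp
    then have "map (nth \<sigma>) [0, i] = map (nth \<sigma>) [0, 0]"
      using sop_y_eq[OF edges] by simp
    then show ?thesis
      by simp
  qed
  show thesis
  proof (rule that[OF const])
    fix m \<beta> \<beta>' assume \<beta>: "ordop m n \<beta>" and \<beta>': "ordop m n \<beta>'"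
      and "map (nth \<sigma>) \<beta> = map (nth \<sigma>) \<beta>'"
    then show "R m `` {?c m \<beta>} = R m `` {?c m \<beta>'}"
      using sop_y[OF \<beta>] sop_y[OF \<beta>'] sop_y_eq[OF \<beta> \<beta>'] by simp
  qed
qed

lemma kernel_collapse_map_subset_admissible:
  assumes "k \<le> n" and "admissible (collapse n k) R"
  shows "kernel_rel (collapse n k) (collapse_map k) m \<subseteq> R m"
proof
  obtain \<sigma> :: "nat list" where const: "\<And>i. i \<le> k \<Longrightarrow> \<sigma> ! i = \<sigma> ! 0"
    and classes: "\<And>m \<beta> \<beta>'. ordop m n \<beta> \<Longrightarrow> ordop m n \<beta>' \<Longrightarrow> map (nth \<sigma>) \<beta> = map (nth \<sigma>) \<beta>' \<Longrightarrow>
           R m `` {collapse_rel n k m `` {\<beta>}} = R m `` {collapse_rel n k m `` {\<beta>'}}"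
    using admissible_collapse_classes[OF assms] by blast
  fix xx assume "xx \<in> kernel_rel (collapse n k) (collapse_map k) m"
  then obtain x x' where xx: "xx = (x, x')" "x \<in> sx (collapse n k) m" "x' \<in> sx (collapse n k) m"
    and eq: "collapse_map k m x = collapse_map k m x'"
    by (auto simp: kernel_rel_def)
  obtain \<beta> \<beta>' where \<beta>: "ordop m n \<beta>" "x = collapse_rel n k m `` {\<beta>}"
    and \<beta>': "ordop m n \<beta>'" "x' = collapse_rel n k m `` {\<beta>'}"
    using xx by (auto simp: sx_collapse elim!: quotientE)
  have "map (\<lambda>i. i - k) \<beta> = map (\<lambda>i. i - k) \<beta>'"
    using eq \<beta> \<beta>' collapse_map_class by simp
  then have "map (nth \<sigma>) \<beta> = map (nth \<sigma>) \<beta>'"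
    using const by (rule map_nth_eq_if_collapsed_eq[rotated])
  then have "R m `` {x} = R m `` {x'}"
    using classes[OF \<beta>(1) \<beta>'(1)] \<beta>(2) \<beta>'(2) by simp
  moreover have "equiv (sx (collapse n k) m) (R m)"
    using assms(2) by (simp add: admissible_def compat_rel_def)
  ultimately show "xx \<in> R m"
    using xx eq_equiv_class_iff by metis
qed

theorem mainTheorem8:
  fixes n k :: nat
  assumes "0 < k" and "k < n"
  shows "\<exists>\<phi>. sset_iso (desing (collapse n k)) (stdsimp (n - k)) \<phi> \<and>
             (\<forall>m x. x \<in> sx (collapse n k) m \<longrightarrow>
                 \<phi> m (eta (collapse n k) m x) = collapse_map k m x)"
proof (rule desing_iso_of_minimal_kernel)
  show "is_sset (collapse n k)" by (rule is_sset_collapse)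
  show "sset_map (collapse n k) (stdsimp (n - k)) (collapse_map k)" by (rule sset_map_collapse_map)
  show "collapse_map k m ` sx (collapse n k) m = sx (stdsimp (n - k)) m" for m
    using assms(2) by (intro collapse_map_surj) simp
  show "nonsingular (stdsimp (n - k))" by (rule nonsingular_stdsimp)
  show "kernel_rel (collapse n k) (collapse_map k) m \<subseteq> R m" if "admissible (collapse n k) R" for R m
    using assms(2) that by (intro kernel_collapse_map_subset_admissible) simp
qed

end
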